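(* In the setting described in the context, the number of solutions $x\in(\mathbb{R}^* )^n$ of the system $S$ equals $2^{\,n-1-\mathrm{rk}(\bar B)}$ times the number of nonzero real roots $r$ of the eliminant $f$ satisfying $$\Big(\tfrac{g_1(r)}{r^{l_1}}\Big)^{\epsilon_1}\cdots\Big(\tfrac{g_n(r)}{r^{l_n}}\Big)^{\epsilon_n}>0$$ for every $\epsilon=(\epsilon_1,\dots,\epsilon_n)\in\mathbb{Z}^n$ whose reduction modulo $2$ belongs to $\ker\bar B$.
   Context: A circuit is a set $\mathcal{C}\subset\mathbb{Z}^n$ of $n+2$ points whose affine span is $\mathbb{R}^n$. Let $\ell$ be a positive integer and $w_1,\dots,w_n\in\mathbb{Z}^n$ be such that $\mathcal{C}=\{0,\ell e_1,w_1,\dots,w_n\}$ is a circuit. Write $w_i=l_ie_1+v_i$ with $l_i\in\mathbb{Z}$ and $v_i\in\{0\}\times\mathbb{Z}^{n-1}\cong\mathbb{Z}^{n-1}$. For $i=1,\dots,n$ let $g_i(x)=a_i+b_ix^{\ell}$ with $a_i,b_i$ nonzero real numbers, such that no two of the $g_i$ have a common complex root. The system $S$ is $x^{w_i}=g_i(x_1)$, $i=1,\dots,n$, where $x=(x_1,\dots,x_n)$ and $x^{w}=x_1^{w^1}\cdots x_n^{w^n}$. After reordering $w_1,\dots,w_n$, the (unique up to sign) primitive integer linear relation among $e_1,w_1,\dots,w_n$ is written $\lambda_0e_1+\sum_{i=1}^{t}\lambda_iw_i=\sum_{i=t+1}^{\nu}\lambda_iw_i$ with $1\le\nu\le n$,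 $0\le t\le\nu$, $\lambda_0,\dots,\lambda_\nu$ coprime integers, $\lambda_0\ge0$ and $\lambda_1,\dots,\lambda_\nu>0$. The eliminant of $S$ is $f(x)=x^{\lambda_0}\prod_{i=1}^{t}g_i(x)^{\lambda_i}-\prod_{i=t+1}^{\nu}g_i(x)^{\lambda_i}$. $\bar B\in M_{n-1,n}(\mathbb{Z}/2)$ is the matrix whose $i$-th column is the reduction modulo $2$ of $v_i$, and $\mathrm{rk}(\bar B)$ its rank over $\mathbb{Z}/2$. *)

theory Defs
  imports Complex_Main "Jordan_Normal_Form.DL_Rank" "HOL-Library.Z2"
begin

text \<open>Points of Z^n are represented as functions nat => int, only the coordinates
  1..n being relevant.\<close>

definition circuit :: "nat \<Rightarrow> (nat \<Rightarrow> nat \<Rightarrow> int) \<Rightarrow> bool" where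
  "circuit n P \<longleftrightarrow>
     inj_on (\<lambda>k. restrict (P k) {1..n}) {0..n+1} \<and>
     (\<forall>y::nat \<Rightarrow> real. \<exists>c::nat \<Rightarrow> real.
        (\<Sum>k=0..n+1. c k) = 1 \<and>
        (\<forall>j\<in>{1..n}. y j = (\<Sum>k=0..n+1. c k * of_int (P k j))))"

definition circ_pts :: "nat \<Rightarrow> (nat \<Rightarrow> nat \<Rightarrow> int) \<Rightarrow> nat \<Rightarrow> nat \<Rightarrow> int" where
  "circ_pts l w k = (if k = 0 then (\<lambda>j. 0)
                     else if k = 1 then (\<lambda>j. if j = 1 then int l else 0)
                     else w (k - 1))"

definition monom_int :: "nat \<Rightarrow> (nat \<Rightarrow> int) \<Rightarrow> (nat \<Rightarrow> real) \<Rightarrow> real" where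
  "monom_int n w x = (\<Prod>j\<in>{1..n}. x j powi w j)"

definition gpol :: "nat \<Rightarrow> real \<Rightarrow> real \<Rightarrow> real \<Rightarrow> real" where
  "gpol l a b x = a + b * x ^ l"

text \<open>The primitive relation is given as mu 0 * e_1 + sum_i mu i * w_i = 0 with
  mu 0 >= 0; the indices with mu i > 0 are those on the left-hand side
  (i = 1..t), those with mu i < 0 the right-hand side (i = t+1..nu), lambda_i = |mu i|.\<close>
definition eliminant :: "nat \<Rightarrow> nat \<Rightarrow> (nat \<Rightarrow> real) \<Rightarrow> (nat \<Rightarrow> real) \<Rightarrow> (nat \<Rightarrow> int) \<Rightarrow> real \<Rightarrow> real" where
  "eliminant n l a b mu x =
     x ^ nat (mu 0) * (\<Prod>i\<in>{i\<in>{1..n}. mu i > 0}. gpol l (a i) (b i) x ^ nat (mu i))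
     - (\<Prod>i\<in>{i\<in>{1..n}. mu i < 0}. gpol l (a i) (b i) x ^ nat (- mu i))"

text \<open>The matrix B-bar over Z/2 (n-1 rows, n columns); column i (0-based) is v_(i+1) mod 2,
  row j (0-based) corresponds to coordinate j+2.\<close>
definition Bbar :: "nat \<Rightarrow> (nat \<Rightarrow> nat \<Rightarrow> int) \<Rightarrow> bit mat" where
  "Bbar n w = mat (n - 1) n (\<lambda>(j, i). of_int (w (i + 1) (j + 2)))"

definition rank2 :: "nat \<Rightarrow> bit mat \<Rightarrow> nat" where
  "rank2 m A = vec_space.rank m A"

end

theory Submission
  imports Defs "Berlekamp_Zassenhaus.Berlekamp_Type_Based"
begin

text \<open>
  Write a solution as \<open>x = (r, x')\<close> with \<open>r = x\<^sub>1\<close>. Dividing the \<open>i\<close>-th equation by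
  \<open>r^l\<^sub>i\<close> turns the system into \<open>x'^v\<^sub>i = rhs\<^sub>i(r) = g\<^sub>i(r) / r^l\<^sub>i\<close>. Separating
  signs from absolute values, this becomes a linear system over \<open>\<int>/2\<close> with matrix \<open>B\<^sup>T\<close>
  for the sign vector of \<open>x'\<close>, together with the real linear system \<open>\<langle>v\<^sub>i, y\<rangle> = ln |rhs\<^sub>i(r)|\<close>
  for \<open>y = ln |x'|\<close>.

  Because the points form a circuit, the \<open>v\<^sub>i\<close> span the hyperplane orthogonal to the relation
  vector \<open>\<lambda>\<close> (\<open>mu\<close> below), so the logarithmic system has a solution, and then a unique one, iff
  \<open>\<Sum> \<lambda>\<^sub>i ln |rhs\<^sub>i(r)| = 0\<close>. A character sum over \<open>(\<int>/2)^k\<close> shows that the sign system is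
  solvable iff the sign vector of \<open>rhs(r)\<close> is orthogonal to \<open>ker B\<close>, which is the positivity
  condition of the statement, and that it then has \<open>2^(n - 1 - rk B)\<close> solutions. Finally, by
  the relation in the first coordinate, \<open>\<Prod> rhs\<^sub>i(r)^\<lambda>\<^sub>i = 1\<close> iff \<open>f(r) = 0\<close>; as \<open>\<lambda> mod 2 \<in> ker B\<close>,
  this product is positive, so \<open>f(r) = 0\<close> is exactly the condition on the logarithms.
\<close>

section \<open>Linear algebra\<close>

lemma UNIV_bit: "(UNIV :: bit set) = {0, 1}"
  by auto

instance bit :: finite
  by standard (simp add: UNIV_bit)

lemma card_UNIV_bit [simp]: "CARD(bit) = 2"
  by (simp add: UNIV_bit)

text \<open>Keep \<open>+\<close> and \<open>*\<close> on \<^typ>\<open>bit\<close> as ring operations instead of rewriting them to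
  \<open>xor\<close> and \<open>and\<close>.\<close>
declare add_bit_eq_xor [simp del] mult_bit_eq_and [simp del]

lemma bit_add_self [simp]: "(x :: bit) + x = 0"
  by (cases x) auto

lemma bit_vec_add_self: "(v :: bit vec) \<in> carrier_vec k \<Longrightarrow> v + v = 0\<^sub>v k"
  by (intro eq_vecI) auto

lemma of_int_bit: "(of_int k :: bit) = (if even k then 0 else 1)"
  by (cases "even k") (auto elim!: evenE oddE)

lemma bit_vec_add_add_cancel:
  "(u :: bit vec) \<in> carrier_vec k \<Longrightarrow> v \<in> carrier_vec k \<Longrightarrow> u + v + v = u"
  by (simp add: assoc_add_vec bit_vec_add_self)

lemma (in vectorspace) card_carrier_eq_card_pow_dim:
  assumes fd: fin_dim and fK: "finite (carrier K)"
  shows "card (carrier V) = card (carrier K) ^ dim"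
proof -
  obtain \<beta> where fb: "finite \<beta>" and b: "basis \<beta>" using finite_basis_exists[OF fd] by blast
  have bC: "\<beta> \<subseteq> carrier V" and li: "lin_indpt \<beta>" and gen: "span \<beta> = carrier V"
    using b unfolding basis_def by auto
  let ?P = "PiE \<beta> (\<lambda>_. carrier K)"
  have "bij_betw (\<lambda>a. lincomb a \<beta>) ?P (carrier V)"
  proof (rule bij_betwI')
    fix a c assume a: "a \<in> ?P" and c: "c \<in> ?P"
    show "(lincomb a \<beta> = lincomb c \<beta>) = (a = c)"
    proof
      assume eq: "lincomb a \<beta> = lincomb c \<beta>"
      have aK: "a \<in> \<beta> \<rightarrow> carrier K" and cK: "c \<in> \<beta> \<rightarrow> carrier K" using a c by auto
      have "lincomb (\<lambda>v. a v \<ominus>\<^bsub>K\<^esub> c v) \<beta> = \<zero>\<^bsub>V\<^esub>"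
        using lincomb_diff[OF fb bC aK cK] eq lincomb_closed[OF bC aK] by simp
      moreover have "(\<lambda>v. a v \<ominus>\<^bsub>K\<^esub> c v) \<in> \<beta> \<rightarrow> carrier K" using aK cK by auto
      ultimately have "\<forall>v\<in>\<beta>. a v \<ominus>\<^bsub>K\<^esub> c v = \<zero>\<^bsub>K\<^esub>"
        using li lin_dep_crit[OF fb order_refl] by blast
      hence "\<forall>v\<in>\<beta>. a v = c v" using aK cK by (auto simp add: Pi_iff module.R.minus_other_side)
      thus "a = c" using a c by (auto intro: extensionalityI[of _ \<beta>] simp: PiE_def)
    qed simp
  next
    fix a assume "a \<in> ?P" thus "lincomb a \<beta> \<in> carrier V" using bC by (intro lincomb_closed) auto
  next
    fix v assume v: "v \<in> carrier V"
    then have "v \<in> {lincomb a \<beta> |a. a \<in> \<beta> \<rightarrow> carrier K}"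
      using gen finite_span[OF fb bC] by simp
    then obtain a where a: "a \<in> \<beta> \<rightarrow> carrier K" and "v = lincomb a \<beta>"
      by blast
    then show "\<exists>a\<in>?P. v = lincomb a \<beta>"
      using bC by (intro bexI[of _ "restrict a \<beta>"]) (auto intro!: lincomb_cong)
  qed
  hence "card (carrier V) = card ?P" by (simp add: bij_betw_same_card)
  also have "\<dots> = card (carrier K) ^ dim" using fb by (simp add: card_PiE dim_basis[OF fb b])
  finally show ?thesis .
qed

lemma card_col_space:
  fixes B :: "'a :: {field, finite} mat"
  assumes B: "B \<in> carrier_mat m n"
  shows "card {B *\<^sub>v x | x. x \<in> carrier_vec n} = CARD('a) ^ vec_space.rank m B"
proof -
  interpret vec_space "TYPE('a)" m .
  have "set (cols B) \<subseteq> carrier_vec m" using B cols_dim by (metis carrier_matD(1))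
  then have vs: "vectorspace class_ring (vs (span (set (cols B))))"
    using span_is_subspace subspace_def subspace_is_vs by simp
  have "card (carrier (vs (span (set (cols B))))) = CARD('a) ^ rank B"
    unfolding rank_def using vectorspace.card_carrier_eq_card_pow_dim[OF vs fin_dim_span_cols[OF B]]
    by simp
  moreover have "carrier (vs (span (set (cols B)))) = {B *\<^sub>v x | x. x \<in> carrier_vec n}"
    using col_space_eq[OF B] B unfolding col_space_def by auto
  ultimately show ?thesis by simp
qed

definition sgn_of_bit :: "bit \<Rightarrow> real" where
  "sgn_of_bit b = (if b = 0 then 1 else -1)"

lemma sgn_of_bit_0 [simp]: "sgn_of_bit 0 = 1"
  and sgn_of_bit_1 [simp]: "sgn_of_bit 1 = -1"
  by (simp_all add: sgn_of_bit_def)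

lemma sgn_of_bit_add: "sgn_of_bit (a + b) = sgn_of_bit a * sgn_of_bit b"
  by (cases a; cases b) (simp_all add: sgn_of_bit_def)

lemma sgn_of_bit_sum: "sgn_of_bit (\<Sum>i\<in>I. f i) = (\<Prod>i\<in>I. sgn_of_bit (f i))"
proof (induction I rule: infinite_finite_induct)
  case (insert i I)
  then show ?case by (simp add: sgn_of_bit_add)
qed simp_all

definition bit_subspace :: "nat \<Rightarrow> bit vec set \<Rightarrow> bool" where
  "bit_subspace k W \<longleftrightarrow> W \<subseteq> carrier_vec k \<and> 0\<^sub>v k \<in> W \<and> (\<forall>u\<in>W. \<forall>v\<in>W. u + v \<in> W)"

lemma sum_sgn_of_bit_nontrivial_hom_eq_0:
  fixes \<phi> :: "bit vec \<Rightarrow> bit"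
  assumes W: "bit_subspace k W"
    and hom: "\<And>u v. u \<in> W \<Longrightarrow> v \<in> W \<Longrightarrow> \<phi> (u + v) = \<phi> u + \<phi> v"
    and a: "a \<in> W" "\<phi> a = 1"
  shows "(\<Sum>w\<in>W. sgn_of_bit (\<phi> w)) = 0"
proof -
  have closed: "w + a \<in> W" if "w \<in> W" for w
    using that a W unfolding bit_subspace_def by auto
  have cancel: "w + a + a = w" if "w \<in> W" for w
    using that a(1) W unfolding bit_subspace_def by (intro bit_vec_add_add_cancel) auto
  have "bij_betw (\<lambda>w. w + a) W W"
    by (rule bij_betwI[where g = "\<lambda>w. w + a"]) (auto simp: closed cancel)
  then have "(\<Sum>w\<in>W. sgn_of_bit (\<phi> w)) = (\<Sum>w\<in>W. sgn_of_bit (\<phi> (w + a)))"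
    by (rule sum.reindex_bij_betw[symmetric])
  also have "\<dots> = - (\<Sum>w\<in>W. sgn_of_bit (\<phi> w))"
    using a by (simp add: hom sgn_of_bit_add flip: sum_negf)
  finally show ?thesis by simp
qed

definition orth_compl :: "nat \<Rightarrow> 'a :: comm_ring_1 vec set \<Rightarrow> 'a vec set" where
  "orth_compl k W = {s \<in> carrier_vec k. \<forall>w\<in>W. s \<bullet> w = 0}"

lemma bit_subspace_orth_compl:
  assumes "W \<subseteq> carrier_vec k"
  shows "bit_subspace k (orth_compl k W)"
  using assms unfolding bit_subspace_def orth_compl_def
  by (auto simp: add_scalar_prod_distrib subset_iff)

lemma card_mult_card_orth_compl:
  assumes W: "bit_subspace k W"
  shows "card W * card (orth_compl k W) = 2 ^ k"
proof -
  let ?V = "carrier_vec k :: bit vec set"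
  have WV: "W \<subseteq> ?V" and "0\<^sub>v k \<in> W" using W unfolding bit_subspace_def by auto
  have finW: "finite W" using WV by (rule finite_subset) simp
  have perpV: "orth_compl k W \<subseteq> ?V" unfolding orth_compl_def by auto
  \<comment> \<open>Double counting of the character sum over pairs s, w of (-1)^(s \<bullet> w).\<close>
  have sum_over_W: "(\<Sum>w\<in>W. sgn_of_bit (s \<bullet> w)) = (if s \<in> orth_compl k W then card W else 0)"
    if s: "s \<in> ?V" for s
  proof (cases "s \<in> orth_compl k W")
    case True
    then show ?thesis by (simp add: orth_compl_def)
  next
    case False
    then obtain w0 where w0: "w0 \<in> W" "s \<bullet> w0 = 1" using s unfolding orth_compl_def by auto
    have "(\<Sum>w\<in>W. sgn_of_bit (s \<bullet> w)) = 0"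
    proof (rule sum_sgn_of_bit_nontrivial_hom_eq_0[where \<phi> = "\<lambda>w. s \<bullet> w", OF W _ w0])
      fix u v assume "u \<in> W" "v \<in> W"
      then show "s \<bullet> (u + v) = s \<bullet> u + s \<bullet> v"
        using s WV by (intro scalar_prod_add_distrib) auto
    qed
    with False show ?thesis by simp
  qed
  have sum_over_V: "(\<Sum>s\<in>?V. sgn_of_bit (s \<bullet> w)) = (if w = 0\<^sub>v k then 2 ^ k else 0)"
    if w: "w \<in> W" for w
  proof (cases "w = 0\<^sub>v k")
    case True
    then show ?thesis by (simp add: card_carrier_vec)
  next
    case False
    have wV: "w \<in> ?V" using w WV by auto
    then obtain j where j: "j < k" "w $ j = 1"
      using False by (metis bit_not_zero_iff carrier_vecD eq_vecI index_zero_vec)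
    have V: "bit_subspace k ?V" unfolding bit_subspace_def by auto
    have "(\<Sum>s\<in>?V. sgn_of_bit (s \<bullet> w)) = 0"
    proof (rule sum_sgn_of_bit_nontrivial_hom_eq_0
        [where \<phi> = "\<lambda>s. s \<bullet> w" and a = "unit_vec k j", OF V])
      fix u v assume "u \<in> ?V" "v \<in> ?V"
      then show "(u + v) \<bullet> w = u \<bullet> w + v \<bullet> w"
        using wV by (intro add_scalar_prod_distrib) auto
    qed (use j wV in auto)
    with False show ?thesis by simp
  qed
  have "(\<Sum>s\<in>?V. \<Sum>w\<in>W. sgn_of_bit (s \<bullet> w))
      = (\<Sum>s\<in>?V. if s \<in> orth_compl k W then real (card W) else 0)"
    by (rule sum.cong) (simp_all add: sum_over_W)
  also have "\<dots> = real (card W * card (orth_compl k W))"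
    using perpV by (simp add: sum.inter_restrict[symmetric] Int_absorb1)
  finally have "real (card W * card (orth_compl k W)) = (\<Sum>s\<in>?V. \<Sum>w\<in>W. sgn_of_bit (s \<bullet> w))" ..
  also have "\<dots> = (\<Sum>w\<in>W. \<Sum>s\<in>?V. sgn_of_bit (s \<bullet> w))"
    by (rule sum.swap)
  also have "\<dots> = (\<Sum>w\<in>W. if w = 0\<^sub>v k then 2 ^ k else 0)"
    by (rule sum.cong) (simp_all add: sum_over_V)
  also have "\<dots> = 2 ^ k"
    using finW \<open>0\<^sub>v k \<in> W\<close> by (simp add: sum.delta)
  finally show ?thesis by (metis of_nat_eq_iff of_nat_numeral of_nat_power)
qed

lemma orth_compl_orth_compl:
  assumes W: "bit_subspace k W"
  shows "orth_compl k (orth_compl k W) = W"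
proof -
  have WV: "W \<subseteq> carrier_vec k" using W unfolding bit_subspace_def by auto
  have sub: "W \<subseteq> orth_compl k (orth_compl k W)"
    using WV unfolding orth_compl_def by (auto simp: comm_scalar_prod[of _ k] subset_iff)
  have perp: "bit_subspace k (orth_compl k W)"
    using bit_subspace_orth_compl[OF WV] .
  have "card (orth_compl k W) * card W
      = card (orth_compl k W) * card (orth_compl k (orth_compl k W))"
    using card_mult_card_orth_compl[OF W] card_mult_card_orth_compl[OF perp]
    by (simp add: mult.commute)
  moreover have "card (orth_compl k W) \<noteq> 0"
    using card_mult_card_orth_compl[OF W] by (metis mult_0_right power_not_zero zero_neq_numeral)
  ultimately have "card W = card (orth_compl k (orth_compl k W))"
    by simp
  moreover have "finite (orth_compl k (orth_compl k W))"
    by (rule finite_subset[of _ "carrier_vec k"]) (auto simp: orth_compl_def)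
  ultimately show ?thesis using sub by (metis card_subset_eq)
qed

lemma bit_subspace_mat_image:
  assumes A: "(A :: bit mat) \<in> carrier_mat p q"
  shows "bit_subspace p {A *\<^sub>v x | x. x \<in> carrier_vec q}"
  unfolding bit_subspace_def
proof (intro conjI ballI)
  show "0\<^sub>v p \<in> {A *\<^sub>v x | x. x \<in> carrier_vec q}"
    using A by (intro CollectI exI[of _ "0\<^sub>v q"]) auto
  fix u v assume "u \<in> {A *\<^sub>v x | x. x \<in> carrier_vec q}" "v \<in> {A *\<^sub>v x | x. x \<in> carrier_vec q}"
  then obtain x y where "x \<in> carrier_vec q" "y \<in> carrier_vec q" "u = A *\<^sub>v x" "v = A *\<^sub>v y"
    by auto
  with A show "u + v \<in> {A *\<^sub>v x | x. x \<in> carrier_vec q}"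
    by (intro CollectI exI[of _ "x + y"]) (auto simp: mult_add_distrib_mat_vec)
qed (use A in auto)

lemma bit_subspace_mat_kernel:
  assumes A: "(A :: bit mat) \<in> carrier_mat p q"
  shows "bit_subspace q {x \<in> carrier_vec q. A *\<^sub>v x = 0\<^sub>v p}"
  using A unfolding bit_subspace_def by (auto simp: mult_add_distrib_mat_vec)

lemma eq_0_if_orthogonal_carrier_vec:
  fixes u :: "'a :: comm_ring_1 vec"
  assumes u: "u \<in> carrier_vec k" and orth: "\<And>s. s \<in> carrier_vec k \<Longrightarrow> s \<bullet> u = 0"
  shows "u = 0\<^sub>v k"
proof (rule eq_vecI)
  fix j assume "j < dim_vec (0\<^sub>v k :: 'a vec)"
  then show "u $ j = 0\<^sub>v k $ j"
    using u orth[of "unit_vec k j"] by simp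
qed (use u in simp)

lemma mat_kernel_eq_orth_compl_image_transpose:
  fixes A :: "'a :: comm_ring_1 mat"
  assumes A: "A \<in> carrier_mat p q"
  shows "{x \<in> carrier_vec q. A *\<^sub>v x = 0\<^sub>v p} = orth_compl q {A\<^sup>T *\<^sub>v y | y. y \<in> carrier_vec p}"
proof -
  have adjoint: "x \<bullet> (A\<^sup>T *\<^sub>v y) = y \<bullet> (A *\<^sub>v x)" if "x \<in> carrier_vec q" "y \<in> carrier_vec p" for x y
    using that A by (metis comm_scalar_prod mult_mat_vec_carrier transpose_carrier_mat
        transpose_vec_mult_scalar)
  have "A *\<^sub>v x = 0\<^sub>v p \<longleftrightarrow> (\<forall>y\<in>carrier_vec p. x \<bullet> (A\<^sup>T *\<^sub>v y) = 0)"
    if x: "x \<in> carrier_vec q" for x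
    using x A adjoint eq_0_if_orthogonal_carrier_vec[of "A *\<^sub>v x" p] by auto
  then show ?thesis unfolding orth_compl_def by auto
qed

lemma card_mat_kernel_transpose_bit:
  fixes B :: "bit mat"
  assumes B: "B \<in> carrier_mat m n"
  shows "card {s \<in> carrier_vec m. B\<^sup>T *\<^sub>v s = 0\<^sub>v n} = 2 ^ (m - vec_space.rank m B)"
proof -
  let ?r = "vec_space.rank m B" and ?K = "{s \<in> carrier_vec m. B\<^sup>T *\<^sub>v s = 0\<^sub>v n}"
  have "?K = orth_compl m {B *\<^sub>v y | y. y \<in> carrier_vec n}"
    using mat_kernel_eq_orth_compl_image_transpose[of "B\<^sup>T" n m] B by simp
  then have prod: "2 ^ ?r * card ?K = (2::nat) ^ m"
    using card_mult_card_orth_compl[OF bit_subspace_mat_image[OF B]] card_col_space[OF B] by simp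
  then have "card ?K \<noteq> 0"
    by (metis mult_0_right power_not_zero zero_neq_numeral)
  then have "(2::nat) ^ ?r * 1 \<le> 2 ^ ?r * card ?K"
    by (intro mult_le_mono2) linarith
  with prod have "(2::nat) ^ ?r \<le> 2 ^ m"
    by simp
  then have "?r \<le> m"
    by simp
  then have "2 ^ ?r * card ?K = 2 ^ ?r * (2::nat) ^ (m - ?r)"
    using prod by (simp flip: power_add)
  then show ?thesis by simp
qed

lemma image_transpose_eq_orth_compl_kernel_bit:
  fixes B :: "bit mat"
  assumes B: "B \<in> carrier_mat m n"
  shows "{B\<^sup>T *\<^sub>v s | s. s \<in> carrier_vec m} = orth_compl n {e \<in> carrier_vec n. B *\<^sub>v e = 0\<^sub>v m}"
  using B by (simp add: mat_kernel_eq_orth_compl_image_transpose orth_compl_orth_compl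
      bit_subspace_mat_image)

lemma card_mat_fibre_bit:
  fixes A :: "bit mat"
  assumes A: "A \<in> carrier_mat p q" and x0: "x0 \<in> carrier_vec q"
  shows "card {x \<in> carrier_vec q. A *\<^sub>v x = A *\<^sub>v x0} = card {x \<in> carrier_vec q. A *\<^sub>v x = 0\<^sub>v p}"
proof -
  have shift: "A *\<^sub>v (x + x0) = A *\<^sub>v x + A *\<^sub>v x0" if "x \<in> carrier_vec q" for x
    using that x0 A by (simp add: mult_add_distrib_mat_vec)
  have "bij_betw (\<lambda>x. x + x0)
      {x \<in> carrier_vec q. A *\<^sub>v x = 0\<^sub>v p} {x \<in> carrier_vec q. A *\<^sub>v x = A *\<^sub>v x0}"
    by (rule bij_betwI[where g = "\<lambda>x. x + x0"])
      (use A x0 in \<open>auto simp: shift bit_vec_add_self bit_vec_add_add_cancel\<close>)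
  then show ?thesis by (simp add: bij_betw_same_card)
qed

lemma mult_mat_vec_solvable_if_det_nonzero:
  fixes A :: "'a :: field mat"
  assumes A: "A \<in> carrier_mat n n" and det: "det A \<noteq> 0" and b: "b \<in> carrier_vec n"
  shows "\<exists>x\<in>carrier_vec n. A *\<^sub>v x = b"
proof -
  obtain A' where A': "A' \<in> carrier_mat n n" "A * A' = 1\<^sub>m n"
    using det_non_zero_imp_unit[OF A det] unfolding Units_def ring_mat_def by auto
  then have "A *\<^sub>v (A' *\<^sub>v b) = b"
    using A b by (simp flip: assoc_mult_mat_vec)
  then show ?thesis
    using A' b by (intro bexI[of _ "A' *\<^sub>v b"]) auto
qed

section \<open>Signs and logarithms of products of powers\<close>

definition sign_bit :: "real \<Rightarrow> bit" where
  "sign_bit x = (if x < 0 then 1 else 0)"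

lemma sgn_of_bit_sign_bit_mult_abs: "sgn_of_bit (sign_bit x) * \<bar>x\<bar> = x"
  by (simp add: sgn_of_bit_def sign_bit_def)

lemma sign_bit_sgn_of_bit_mult: "c > 0 \<Longrightarrow> sign_bit (sgn_of_bit s * c) = s"
  by (cases s) (simp_all add: sgn_of_bit_def sign_bit_def)

lemma power_int_eq_sgn_of_bit_mult_abs:
  assumes "(x :: real) \<noteq> 0"
  shows "x powi k = sgn_of_bit (of_int k * sign_bit x) * \<bar>x\<bar> powi k"
proof (cases "x < 0")
  case True
  then have "x powi k = (- \<bar>x\<bar>) powi k" by simp
  with True show ?thesis
    by (simp add: power_int_minus_left sign_bit_def of_int_bit)
qed (use assms in \<open>simp add: sign_bit_def\<close>)

lemma prod_power_int_eq_sgn_of_bit_mult_abs: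
  assumes "\<forall>i\<in>I. z i \<noteq> (0 :: real)"
  shows "(\<Prod>i\<in>I. z i powi k i)
    = sgn_of_bit (\<Sum>i\<in>I. of_int (k i) * sign_bit (z i)) * (\<Prod>i\<in>I. \<bar>z i\<bar> powi k i)"
proof -
  have "(\<Prod>i\<in>I. z i powi k i) = (\<Prod>i\<in>I. sgn_of_bit (of_int (k i) * sign_bit (z i)) * \<bar>z i\<bar> powi k i)"
    using assms by (intro prod.cong refl power_int_eq_sgn_of_bit_mult_abs) auto
  then show ?thesis
    by (simp add: sgn_of_bit_sum prod.distrib)
qed

lemma prod_abs_power_int_pos:
  "\<forall>i\<in>I. z i \<noteq> (0 :: real) \<Longrightarrow> (\<Prod>i\<in>I. \<bar>z i\<bar> powi k i) > 0"
  by (intro prod_pos) auto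

lemma ln_power_int: "(x :: real) > 0 \<Longrightarrow> ln (x powi k) = of_int k * ln x"
  by (cases "k \<ge> 0") (simp_all add: power_int_def ln_realpow ln_inverse flip: power_inverse)

lemma ln_prod_power_int:
  assumes "finite I" "\<forall>i\<in>I. z i > (0 :: real)"
  shows "ln (\<Prod>i\<in>I. z i powi k i) = (\<Sum>i\<in>I. of_int (k i) * ln (z i))"
  using assms by (subst ln_prod) (auto simp: ln_power_int)

lemma sgn_of_bit_mult_eq_iff:
  assumes "A > 0"
  shows "sgn_of_bit S * A = D \<longleftrightarrow> D \<noteq> 0 \<and> S = sign_bit D \<and> ln A = ln \<bar>D\<bar>"
  using assms by (cases S) (auto simp: sign_bit_def)

lemma prod_power_int_eq_iff:
  assumes "finite I" and nz: "\<forall>i\<in>I. z i \<noteq> (0 :: real)"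
  shows "(\<Prod>i\<in>I. z i powi k i) = D \<longleftrightarrow>
    D \<noteq> 0 \<and> (\<Sum>i\<in>I. of_int (k i) * sign_bit (z i)) = sign_bit D \<and>
    (\<Sum>i\<in>I. of_int (k i) * ln \<bar>z i\<bar>) = ln \<bar>D\<bar>"
  using assms prod_abs_power_int_pos[OF nz]
  by (simp add: prod_power_int_eq_sgn_of_bit_mult_abs[OF nz] sgn_of_bit_mult_eq_iff
      ln_prod_power_int)

lemma prod_power_int_pos_iff:
  assumes nz: "\<forall>i\<in>I. z i \<noteq> (0 :: real)"
  shows "(\<Prod>i\<in>I. z i powi k i) > 0 \<longleftrightarrow> (\<Sum>i\<in>I. of_int (k i) * sign_bit (z i)) = 0"
  using prod_abs_power_int_pos[OF nz, of k]
  by (cases "(\<Sum>i\<in>I. of_int (k i) * sign_bit (z i))")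
    (auto simp: prod_power_int_eq_sgn_of_bit_mult_abs[OF nz] zero_less_mult_iff)

lemma power_int_sum:
  assumes "(x :: 'a :: field) \<noteq> 0"
  shows "x powi (\<Sum>i\<in>I. f i) = (\<Prod>i\<in>I. x powi f i)"
  using assms by (induction I rule: infinite_finite_induct) (simp_all add: power_int_add)

section \<open>Circuits\<close>

lemma circuit_pos:
  assumes "circuit n P"
  shows "0 < n"
proof (rule ccontr)
  assume n: "\<not> 0 < n"
  have "inj_on (\<lambda>k. restrict (P k) {1..n}) {0..n+1}"
    using assms unfolding circuit_def by blast
  moreover have "restrict (P 0) {1..n} = restrict (P 1) {1..n}"
    using n by auto
  ultimately have "(0::nat) = 1"
    by (rule inj_onD) auto
  then show False by simp
qed

lemma circuit_orthogonal_eq_0: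
  assumes circ: "circuit n P"
    and orth: "\<And>k. k \<in> {0..n+1} \<Longrightarrow> (\<Sum>j\<in>{1..n}. of_int (P k j) * z j) = (0 :: real)"
    and j: "j \<in> {1..n}"
  shows "z j = 0"
proof -
  \<comment> \<open>z is an affine combination of the points, so \<open>|z|\<^sup>2 = \<Sum> c\<^sub>k \<langle>P\<^sub>k, z\<rangle> = 0\<close>.\<close>
  define K where "K = {0..n+1}"
  obtain c where c: "\<And>j. j \<in> {1..n} \<Longrightarrow> z j = (\<Sum>k\<in>K. c k * of_int (P k j))"
    using circ unfolding circuit_def K_def by blast
  have "z j * z j = (\<Sum>k\<in>K. c k * (of_int (P k j) * z j))" if "j \<in> {1..n}" for j
    using arg_cong[OF c[OF that], of "\<lambda>t. t * z j"] by (simp add: sum_distrib_right mult.assoc)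
  then have "(\<Sum>j\<in>{1..n}. z j * z j) = (\<Sum>j\<in>{1..n}. \<Sum>k\<in>K. c k * (of_int (P k j) * z j))"
    by simp
  also have "\<dots> = (\<Sum>k\<in>K. c k * (\<Sum>j\<in>{1..n}. of_int (P k j) * z j))"
    by (subst sum.swap) (simp add: sum_distrib_left)
  also have "\<dots> = 0"
    using orth by (simp add: K_def)
  finally show ?thesis
    using j by (simp add: sum_nonneg_eq_0_iff)
qed

section \<open>Solutions of the system\<close>

lemma card_eq_mult_card_if_fibres:
  assumes img: "f ` X \<subseteq> R" and fib: "\<And>r. r \<in> R \<Longrightarrow> card {x\<in>X. f x = r} = k" and k: "k > 0"
  shows "card X = k * card R"
proof (cases "finite R")
  case True
  have X: "X = (\<Union>r\<in>R. {x\<in>X. f x = r})" using img by auto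
  have "finite {x\<in>X. f x = r}" if "r \<in> R" for r
    using fib[OF that] k by (intro card_ge_0_finite) simp
  then have "card X = (\<Sum>r\<in>R. card {x\<in>X. f x = r})"
    by (subst X, intro card_UN_disjoint) (use True in auto)
  then show ?thesis using fib by simp
next
  case False
  have "{x\<in>X. f x = r} \<noteq> {}" if "r \<in> R" for r
    using fib[OF that] k by (metis card.empty less_irrefl)
  then have "R \<subseteq> f ` X" by blast
  then have "infinite X" using False finite_surj by blast
  then show ?thesis using False by simp
qed

lemma sum_atLeast1_atMost_Suc: "(\<Sum>j\<in>{1..Suc m}. f j) = f 1 + (\<Sum>q<m. f (q + 2))"
  by (induction m) (auto simp: atLeastAtMostSuc_conv ac_simps)

lemma prod_atLeast1_atMost_Suc: "(\<Prod>j\<in>{1..Suc m}. f j) = f 1 * (\<Prod>q<m. f (q + 2))"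
  by (induction m) (auto simp: atLeastAtMostSuc_conv ac_simps)

lemma ball_atLeast1_atMost_iff: "(\<forall>i\<in>{1..n}. P i) \<longleftrightarrow> (\<forall>i<n. P (Suc i))"
proof
  assume "\<forall>i<n. P (Suc i)"
  moreover have "\<exists>k<n. i = Suc k" if "i \<in> {1..n}" for i
    using that by (cases i) auto
  ultimately show "\<forall>i\<in>{1..n}. P i"
    by blast
qed auto

locale circuit_system =
  fixes n m l :: nat and w :: "nat \<Rightarrow> nat \<Rightarrow> int" and g :: "nat \<Rightarrow> real \<Rightarrow> real"
    and mu :: "nat \<Rightarrow> int"
  assumes circ: "circuit n (circ_pts l w)"
    and rel: "\<forall>j\<in>{1..n}. mu 0 * (if j = 1 then 1 else 0) + (\<Sum>i\<in>{1..n}. mu i * w i j) = 0"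
    and prim: "Gcd (mu ` {0..n}) = 1"
    and mu0: "mu 0 \<ge> 0"
    and n_eq: "n = Suc m"
begin

lemma n_pos: "0 < n"
  using n_eq by simp

lemma Bbar_carrier: "Bbar n w \<in> carrier_mat m n"
  by (simp add: Bbar_def n_eq)

lemma Bbar_mult_vec_index:
  assumes "q < m" and "e \<in> carrier_vec n"
  shows "(Bbar n w *\<^sub>v e) $ q = (\<Sum>i<n. of_int (w (i + 1) (q + 2)) * e $ i)"
  using assms by (simp add: Bbar_def n_eq scalar_prod_def atLeast0LessThan)

lemma Bbar_transpose_mult_vec_index:
  assumes "i < n" and "s \<in> carrier_vec m"
  shows "((Bbar n w)\<^sup>T *\<^sub>v s) $ i = (\<Sum>q<m. of_int (w (i + 1) (q + 2)) * s $ q)"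
  using assms by (simp add: Bbar_def n_eq scalar_prod_def atLeast0LessThan)

lemma rel_first: "(\<Sum>i\<in>{1..n}. mu i * w i 1) = - mu 0"
  using rel n_eq by force

lemma rel_tail:
  assumes "q < m"
  shows "(\<Sum>i\<in>{1..n}. mu i * w i (q + 2)) = 0"
proof -
  have "q + 2 \<in> {1..n}"
    using assms n_eq by auto
  then show ?thesis
    using rel by fastforce
qed

lemma mu_nonzero: "\<exists>i\<in>{1..n}. mu i \<noteq> 0"
proof (rule ccontr)
  assume "\<not> ?thesis"
  then have "mu k = 0" if "k \<in> {0..n}" for k
    using that rel_first by (cases "k = 0") auto
  then have "mu ` {0..n} = {0}"
    by force
  then show False
    using prim by simp
qed

lemma mu_mod_2_in_kernel: "Bbar n w *\<^sub>v vec n (\<lambda>i. of_int (mu (i + 1))) = 0\<^sub>v m"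
proof (rule eq_vecI)
  fix q assume "q < dim_vec (0\<^sub>v m :: bit vec)"
  then have q: "q < m" by simp
  have "(\<Sum>i<n. w (i + 1) (q + 2) * mu (i + 1)) = 0"
    using rel_tail[OF q] by (simp add: sum.atLeast1_atMost_eq mult.commute)
  then have "(of_int (\<Sum>i<n. w (i + 1) (q + 2) * mu (i + 1)) :: bit) = 0"
    by simp
  then have "(\<Sum>i<n. of_int (w (i + 1) (q + 2)) * (of_int (mu (i + 1)) :: bit)) = 0"
    by (simp only: of_int_sum of_int_mult)
  then show "(Bbar n w *\<^sub>v vec n (\<lambda>i. of_int (mu (i + 1)))) $ q = 0\<^sub>v m $ q"
    using q by (simp add: Bbar_mult_vec_index)
qed (use Bbar_carrier in auto)

lemma monom_int_split: "monom_int n u x = x 1 powi u 1 * (\<Prod>q<m. x (q + 2) powi u (q + 2))"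
  unfolding monom_int_def n_eq by (rule prod_atLeast1_atMost_Suc)

text \<open>\<open>vdot i y = \<langle>v\<^sub>i, y\<rangle>\<close>, where coordinate \<open>q\<close> of \<open>y\<close> stands for coordinate \<open>q + 2\<close> of \<open>\<int>\<^sup>n\<close>.\<close>
definition vdot :: "nat \<Rightarrow> (nat \<Rightarrow> real) \<Rightarrow> real" where
  "vdot i y = (\<Sum>q<m. of_int (w i (q + 2)) * y q)"

lemma vdot_cong: "(\<And>q. q < m \<Longrightarrow> y q = y' q) \<Longrightarrow> vdot i y = vdot i y'"
  unfolding vdot_def by (intro sum.cong) auto

lemma mu_vdot: "(\<Sum>i\<in>{1..n}. of_int (mu i) * vdot i y) = 0"
proof -
  have "(\<Sum>i\<in>{1..n}. of_int (mu i) * vdot i y)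
      = (\<Sum>q<m. y q * (\<Sum>i\<in>{1..n}. of_int (mu i) * of_int (w i (q + 2))))"
    unfolding vdot_def by (simp add: sum_distrib_left sum_distrib_right mult_ac, rule sum.swap)
  also have "\<dots> = 0"
    using arg_cong[OF rel_tail, of _ "of_int :: int \<Rightarrow> real"] by simp
  finally show ?thesis .
qed

lemma vdot_inj:
  assumes eq: "\<forall>i\<in>{1..n}. vdot i y = vdot i y'" and q: "q < m"
  shows "y q = y' q"
proof -
  define z where "z j = (if 2 \<le> j then y (j - 2) - y' (j - 2) else 0)" for j
  have tail: "(\<Sum>j\<in>{1..n}. of_int (u j) * z j) = (\<Sum>q<m. of_int (u (q + 2)) * (y q - y' q))"
    for u :: "nat \<Rightarrow> int"
    unfolding n_eq sum_atLeast1_atMost_Suc by (simp add: z_def)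
  have orth: "(\<Sum>j\<in>{1..n}. of_int (circ_pts l w k j) * z j) = 0" if k: "k \<in> {0..n+1}" for k
  proof -
    consider "k = 0" | "k = 1" | "k \<ge> 2" by linarith
    then have "(\<Sum>q<m. of_int (circ_pts l w k (q + 2)) * (y q - y' q)) = 0"
    proof cases
      case 3
      then have "k - 1 \<in> {1..n}"
        using k by auto
      then have "vdot (k - 1) y = vdot (k - 1) y'"
        using eq by blast
      with 3 show ?thesis
        by (simp add: circ_pts_def vdot_def right_diff_distrib sum_subtractf)
    qed (simp_all add: circ_pts_def)
    then show ?thesis
      by (simp only: tail)
  qed
  have "z (q + 2) = 0"
    by (rule circuit_orthogonal_eq_0[OF circ orth]) (use q n_eq in auto)
  then show ?thesis
    by (simp add: z_def)
qed

text \<open>The matrix with rows \<open>(v\<^sub>i, \<mu>\<^sub>i)\<close>. Its first \<open>m\<close> columns are independent by the circuit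
  condition and orthogonal to its last column \<open>\<mu>\<close> by the relation, so it is invertible.\<close>
definition aug_mat :: "real mat" where
  "aug_mat = mat n n (\<lambda>(i, q). if q < m then of_int (w (i + 1) (q + 2)) else of_int (mu (i + 1)))"

lemma aug_mat_carrier: "aug_mat \<in> carrier_mat n n"
  by (simp add: aug_mat_def)

lemma aug_mat_mult_vec_index:
  assumes "z \<in> carrier_vec n" and "i \<in> {1..n}"
  shows "(aug_mat *\<^sub>v z) $ (i - 1) = vdot i (\<lambda>q. z $ q) + of_int (mu i) * z $ m"
proof -
  have "i - 1 < n" and "dim_vec z = n"
    using assms by auto
  then have "(aug_mat *\<^sub>v z) $ (i - 1) = (\<Sum>q<n. aug_mat $$ (i - 1, q) * z $ q)"
    by (simp add: aug_mat_def scalar_prod_def atLeast0LessThan)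
  also have "\<dots> = (\<Sum>q<m. aug_mat $$ (i - 1, q) * z $ q) + aug_mat $$ (i - 1, m) * z $ m"
    unfolding n_eq by simp
  also have "\<dots> = vdot i (\<lambda>q. z $ q) + of_int (mu i) * z $ m"
    unfolding vdot_def using \<open>i - 1 < n\<close> assms(2) less_Suc_eq[of _ m, folded n_eq]
    by (intro arg_cong2[where f = "(+)"] sum.cong) (auto simp: aug_mat_def)
  finally show ?thesis .
qed

lemma aug_mat_mult_vec_last:
  assumes z: "z \<in> carrier_vec n"
    and orth: "(\<Sum>i\<in>{1..n}. of_int (mu i) * (aug_mat *\<^sub>v z) $ (i - 1)) = 0"
  shows "z $ m = 0"
proof -
  have "(\<Sum>i\<in>{1..n}. of_int (mu i) * (aug_mat *\<^sub>v z) $ (i - 1))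
      = (\<Sum>i\<in>{1..n}. of_int (mu i) * vdot i (\<lambda>q. z $ q) + z $ m * of_int (mu i) ^ 2)"
    by (intro sum.cong refl)
      (use aug_mat_mult_vec_index[OF z] in \<open>simp add: algebra_simps power2_eq_square\<close>)
  also have "\<dots> = z $ m * (\<Sum>i\<in>{1..n}. of_int (mu i) ^ 2)"
    using mu_vdot[of "\<lambda>q. z $ q"] by (simp add: sum.distrib sum_distrib_left)
  finally have "z $ m * (\<Sum>i\<in>{1..n}. of_int (mu i) ^ 2) = 0"
    using orth by simp
  moreover have "(\<Sum>i\<in>{1..n}. of_int (mu i) ^ 2 :: real) > 0"
  proof -
    obtain k where "k \<in> {1..n}" "mu k \<noteq> 0"
      using mu_nonzero by blast
    then show ?thesis
      by (intro sum_pos2[of _ k]) auto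
  qed
  ultimately show ?thesis
    by simp
qed

lemma det_aug_mat_nonzero: "det aug_mat \<noteq> 0"
proof
  assume "det aug_mat = 0"
  then obtain z where z: "z \<in> carrier_vec n" "z \<noteq> 0\<^sub>v n" "aug_mat *\<^sub>v z = 0\<^sub>v n"
    unfolding det_0_iff_vec_prod_zero_field[OF aug_mat_carrier] by blast
  have aug0: "(aug_mat *\<^sub>v z) $ (i - 1) = 0" if "i \<in> {1..n}" for i
  proof -
    have "i - 1 < n" using that by auto
    then show ?thesis by (simp add: z(3))
  qed
  then have last: "z $ m = 0"
    using aug_mat_mult_vec_last[OF z(1)] by simp
  have "vdot i (\<lambda>q. z $ q) = vdot i (\<lambda>_. 0)" if "i \<in> {1..n}" for i
    using aug_mat_mult_vec_index[OF z(1) that] aug0[OF that] last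
    by (simp add: vdot_def)
  then have "z $ q = 0" if "q < m" for q
    using vdot_inj[of "\<lambda>q. z $ q" "\<lambda>_. 0"] that by blast
  then have "z = 0\<^sub>v n"
    using z(1) last n_eq by (intro eq_vecI) (auto simp: less_Suc_eq)
  with z(2) show False ..
qed

lemma exists_vdot_eq:
  assumes "(\<Sum>i\<in>{1..n}. of_int (mu i) * \<beta> i) = 0"
  shows "\<exists>y. \<forall>i\<in>{1..n}. vdot i y = \<beta> i"
proof -
  obtain z where z: "z \<in> carrier_vec n" "aug_mat *\<^sub>v z = vec n (\<lambda>i. \<beta> (i + 1))"
    using mult_mat_vec_solvable_if_det_nonzero[OF aug_mat_carrier det_aug_mat_nonzero,
        of "vec n (\<lambda>i. \<beta> (i + 1))"] by auto
  then have \<beta>: "(aug_mat *\<^sub>v z) $ (i - 1) = \<beta> i" if "i \<in> {1..n}" for i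
  proof -
    have "i - 1 < n" using that by auto
    then show ?thesis using that by (simp add: z(2))
  qed
  then have "z $ m = 0"
    using aug_mat_mult_vec_last[OF z(1)] assms by simp
  then show ?thesis
    using \<beta> aug_mat_mult_vec_index[OF z(1)] by (intro exI[of _ "\<lambda>q. z $ q"]) simp
qed

definition rhs :: "nat \<Rightarrow> real \<Rightarrow> real" where
  "rhs i r = g i r / r powi w i 1"

definition rhs_signs :: "real \<Rightarrow> bit vec" where
  "rhs_signs r = vec n (\<lambda>i. sign_bit (rhs (i + 1) r))"

definition sign_pattern :: "(nat \<Rightarrow> real) \<Rightarrow> bit vec" where
  "sign_pattern x = vec m (\<lambda>q. sign_bit (x (q + 2)))"

lemma sign_pattern_carrier [simp]: "sign_pattern x \<in> carrier_vec m"
  by (simp add: sign_pattern_def)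

lemma rhs_signs_carrier [simp]: "rhs_signs r \<in> carrier_vec n"
  by (simp add: rhs_signs_def)

lemma Bbar_transpose_sign_pattern_eq_iff:
  "(Bbar n w)\<^sup>T *\<^sub>v sign_pattern x = rhs_signs r \<longleftrightarrow>
    (\<forall>i\<in>{1..n}. (\<Sum>q<m. of_int (w i (q + 2)) * sign_bit (x (q + 2))) = sign_bit (rhs i r))"
proof -
  have "((Bbar n w)\<^sup>T *\<^sub>v sign_pattern x) $ i
      = (\<Sum>q<m. of_int (w (i + 1) (q + 2)) * sign_bit (x (q + 2)))"
    if "i < n" for i
    using that by (simp add: Bbar_transpose_mult_vec_index sign_pattern_def)
  then show ?thesis
    unfolding ball_atLeast1_atMost_iff using Bbar_carrier by (simp add: vec_eq_iff rhs_signs_def)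
qed

lemma monom_eq_iff:
  assumes r: "r \<noteq> 0" and x1: "x 1 = r" and x: "\<forall>q<m. x (q + 2) \<noteq> 0"
  shows "monom_int n (w i) x = g i r \<longleftrightarrow>
    rhs i r \<noteq> 0 \<and> (\<Sum>q<m. of_int (w i (q + 2)) * sign_bit (x (q + 2))) = sign_bit (rhs i r) \<and>
    vdot i (\<lambda>q. ln \<bar>x (q + 2)\<bar>) = ln \<bar>rhs i r\<bar>" (is "_ \<longleftrightarrow> ?rhs")
proof -
  have "monom_int n (w i) x = g i r \<longleftrightarrow> (\<Prod>q<m. x (q + 2) powi w i (q + 2)) = rhs i r"
    unfolding monom_int_split x1 using r by (auto simp: rhs_def field_simps)
  also have "\<dots> \<longleftrightarrow> ?rhs"
    using x by (subst prod_power_int_eq_iff) (auto simp: vdot_def)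
  finally show ?thesis .
qed

lemma system_eq_iff:
  assumes "r \<noteq> 0" and "x 1 = r" and "\<forall>q<m. x (q + 2) \<noteq> 0"
  shows "(\<forall>i\<in>{1..n}. monom_int n (w i) x = g i r) \<longleftrightarrow>
    (\<forall>i\<in>{1..n}. rhs i r \<noteq> 0) \<and> (Bbar n w)\<^sup>T *\<^sub>v sign_pattern x = rhs_signs r \<and>
    (\<forall>i\<in>{1..n}. vdot i (\<lambda>q. ln \<bar>x (q + 2)\<bar>) = ln \<bar>rhs i r\<bar>)"
  unfolding monom_eq_iff[OF assms] Bbar_transpose_sign_pattern_eq_iff by blast

lemma prod_rhs_power_int_pos_iff:
  assumes nz: "\<forall>i\<in>{1..n}. rhs i r \<noteq> 0"
  shows "(\<Prod>i\<in>{1..n}. rhs i r powi eps i) > 0 \<longleftrightarrow> rhs_signs r \<bullet> vec n (\<lambda>i. of_int (eps (i + 1))) = 0"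
proof -
  have "rhs_signs r \<bullet> vec n (\<lambda>i. of_int (eps (i + 1)))
      = (\<Sum>i<n. of_int (eps (Suc i)) * sign_bit (rhs (Suc i) r))"
    unfolding scalar_prod_def rhs_signs_def dim_vec atLeast0LessThan
    by (intro sum.cong refl) (simp add: mult.commute)
  also have "\<dots> = (\<Sum>i\<in>{1..n}. of_int (eps i) * sign_bit (rhs i r))"
    by (simp add: sum.atLeast1_atMost_eq)
  finally show ?thesis
    using prod_power_int_pos_iff[OF nz] by simp
qed

lemma sign_condition_iff:
  "(\<forall>eps. Bbar n w *\<^sub>v vec n (\<lambda>i. of_int (eps (i + 1))) = 0\<^sub>v m \<longrightarrow>
      (\<Prod>i\<in>{1..n}. rhs i r powi eps i) > 0)
    \<longleftrightarrow> (\<forall>i\<in>{1..n}. rhs i r \<noteq> 0) \<and>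
      rhs_signs r \<in> orth_compl n {e \<in> carrier_vec n. Bbar n w *\<^sub>v e = 0\<^sub>v m}"
  (is "?sign_cond \<longleftrightarrow> ?nz \<and> ?orth")
proof
  assume cond: ?sign_cond
  have kernel_0: "Bbar n w *\<^sub>v 0\<^sub>v n = 0\<^sub>v m"
    using bit_subspace_mat_kernel[OF Bbar_carrier] by (simp add: bit_subspace_def)
  show "?nz \<and> ?orth"
  proof
    show nz: ?nz
    proof
      fix i assume i: "i \<in> {1..n}"
      \<comment> \<open>\<open>\<epsilon> = 2 e\<^sub>i\<close> vanishes modulo 2.\<close>
      define eps where "eps j = (if j = i then 2 else 0 :: int)" for j
      have "vec n (\<lambda>j. of_int (eps (j + 1))) = (0\<^sub>v n :: bit vec)"
        by (rule eq_vecI) (simp_all add: eps_def)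
      then have "(\<Prod>j\<in>{1..n}. rhs j r powi eps j) > 0"
        using cond kernel_0 by auto
      also have "(\<Prod>j\<in>{1..n}. rhs j r powi eps j) = (\<Prod>j\<in>{1..n}. if j = i then rhs i r powi 2 else 1)"
        by (intro prod.cong refl) (simp add: eps_def)
      also have "\<dots> = rhs i r powi 2"
        using i by simp
      finally show "rhs i r \<noteq> 0"
        by auto
    qed
    have "rhs_signs r \<bullet> e = 0" if e: "e \<in> carrier_vec n" "Bbar n w *\<^sub>v e = 0\<^sub>v m" for e
    proof -
      define eps where "eps j = (if e $ (j - 1) = 1 then 1 else 0 :: int)" for j
      have "vec n (\<lambda>i. of_int (eps (i + 1))) = e"
        using e(1) by (intro eq_vecI) (auto simp: eps_def elim: bit.exhaust)
      then show ?thesis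
        using cond e(2) prod_rhs_power_int_pos_iff[OF nz] by metis
    qed
    then show ?orth
      unfolding orth_compl_def by auto
  qed
next
  assume "?nz \<and> ?orth"
  then show ?sign_cond
    unfolding orth_compl_def using prod_rhs_power_int_pos_iff by auto
qed

definition elim :: "real \<Rightarrow> real" where
  "elim r = r ^ nat (mu 0) * (\<Prod>i\<in>{i\<in>{1..n}. 0 < mu i}. g i r ^ nat (mu i))
    - (\<Prod>i\<in>{i\<in>{1..n}. mu i < 0}. g i r ^ nat (- mu i))"

lemma elim_eq_0_iff:
  assumes r: "r \<noteq> 0" and nz: "\<forall>i\<in>{1..n}. rhs i r \<noteq> 0"
  shows "elim r = 0 \<longleftrightarrow> (\<Prod>i\<in>{1..n}. rhs i r powi mu i) = 1"
proof -
  define pos where "pos = (\<Prod>i\<in>{i\<in>{1..n}. 0 < mu i}. g i r ^ nat (mu i))"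
  define neg where "neg = (\<Prod>i\<in>{i\<in>{1..n}. mu i < 0}. g i r ^ nat (- mu i))"
  have g_nz: "\<forall>i\<in>{1..n}. g i r \<noteq> 0"
    using nz by (simp add: rhs_def)
  then have "neg \<noteq> 0"
    unfolding neg_def by simp
  have g_pow: "g i r powi mu i
      = (if 0 < mu i then g i r ^ nat (mu i) else 1)
        / (if mu i < 0 then g i r ^ nat (- mu i) else 1)"
    for i
    by (simp add: power_int_def divide_inverse power_inverse)
  have g_prod: "(\<Prod>i\<in>{1..n}. g i r powi mu i) = pos / neg"
    unfolding g_pow prod_dividef pos_def neg_def prod.inter_filter[OF finite_atLeastAtMost] ..
  \<comment> \<open>The first coordinate of the relation collapses the powers of \<open>r\<close> to \<open>r^(-\<mu> 0)\<close>.\<close>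
  have "(\<Prod>i\<in>{1..n}. (r powi w i 1) powi mu i) = (\<Prod>i\<in>{1..n}. r powi (mu i * w i 1))"
    by (intro prod.cong refl) (metis power_int_mult mult.commute)
  also have "\<dots> = r powi (\<Sum>i\<in>{1..n}. mu i * w i 1)"
    by (rule power_int_sum[symmetric, OF r])
  also have "\<dots> = 1 / r ^ nat (mu 0)"
    unfolding rel_first using mu0
    by (simp add: power_int_minus power_int_def divide_inverse power_inverse)
  finally have r_prod: "(\<Prod>i\<in>{1..n}. (r powi w i 1) powi mu i) = 1 / r ^ nat (mu 0)" .
  have "(\<Prod>i\<in>{1..n}. rhs i r powi mu i)
      = (\<Prod>i\<in>{1..n}. g i r powi mu i) / (\<Prod>i\<in>{1..n}. (r powi w i 1) powi mu i)"
    unfolding rhs_def power_int_divide_distrib by (rule prod_dividef)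
  then have "(\<Prod>i\<in>{1..n}. rhs i r powi mu i) = r ^ nat (mu 0) * pos / neg"
    unfolding g_prod r_prod by simp
  moreover have "elim r = r ^ nat (mu 0) * pos - neg"
    unfolding elim_def pos_def neg_def ..
  ultimately have "elim r = neg * ((\<Prod>i\<in>{1..n}. rhs i r powi mu i) - 1)"
    using \<open>neg \<noteq> 0\<close> by (simp add: field_simps)
  then show ?thesis
    using \<open>neg \<noteq> 0\<close> by simp
qed

definition admissible_roots :: "real set" where
  "admissible_roots = {r. r \<noteq> 0 \<and> elim r = 0 \<and>
     (\<forall>eps. Bbar n w *\<^sub>v vec n (\<lambda>i. of_int (eps (i + 1))) = 0\<^sub>v m \<longrightarrow>
       (\<Prod>i\<in>{1..n}. rhs i r powi eps i) > 0)}"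

lemma admissible_roots_iff:
  "r \<in> admissible_roots \<longleftrightarrow> r \<noteq> 0 \<and> (\<forall>i\<in>{1..n}. rhs i r \<noteq> 0) \<and>
     rhs_signs r \<in> orth_compl n {e \<in> carrier_vec n. Bbar n w *\<^sub>v e = 0\<^sub>v m} \<and>
     (\<Sum>i\<in>{1..n}. of_int (mu i) * ln \<bar>rhs i r\<bar>) = 0"
proof (cases "r \<noteq> 0 \<and> (\<forall>i\<in>{1..n}. rhs i r \<noteq> 0) \<and>
    rhs_signs r \<in> orth_compl n {e \<in> carrier_vec n. Bbar n w *\<^sub>v e = 0\<^sub>v m}")
  case True
  then have nz: "\<forall>i\<in>{1..n}. rhs i r \<noteq> 0" by blast
  \<comment> \<open>\<open>\<mu>\<close> lies in the kernel of \<open>B\<close> modulo 2, so the signs of the factors of the product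
    \<open>\<Prod> rhs\<^sub>i\<^sup>\<mu>\<^sup>i\<close> cancel and only its absolute value decides whether it equals 1.\<close>
  have "(\<Prod>i\<in>{1..n}. rhs i r powi mu i) > 0"
    using True sign_condition_iff[of r] mu_mod_2_in_kernel by blast
  then have "(\<Sum>i\<in>{1..n}. of_int (mu i) * sign_bit (rhs i r)) = 0"
    using prod_power_int_pos_iff[OF nz] by blast
  then have "elim r = 0 \<longleftrightarrow> (\<Sum>i\<in>{1..n}. of_int (mu i) * ln \<bar>rhs i r\<bar>) = 0"
    using True by (simp add: elim_eq_0_iff prod_power_int_eq_iff nz sign_bit_def)
  then show ?thesis
    using True sign_condition_iff[of r] unfolding admissible_roots_def by auto
next
  case False
  then show ?thesis
    using sign_condition_iff[of r] unfolding admissible_roots_def by auto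
qed

definition torus :: "(nat \<Rightarrow> real) set" where
  "torus = {x. (\<forall>j. j \<notin> {1..n} \<longrightarrow> x j = 0) \<and> (\<forall>j\<in>{1..n}. x j \<noteq> 0)}"

definition solutions :: "(nat \<Rightarrow> real) set" where
  "solutions = {x \<in> torus. \<forall>i\<in>{1..n}. monom_int n (w i) x = g i (x 1)}"

lemma torus_coords_nonzero:
  assumes "x \<in> torus"
  shows "x 1 \<noteq> 0" and "q < m \<Longrightarrow> x (q + 2) \<noteq> 0"
  using assms n_eq unfolding torus_def by auto

definition torus_point :: "real \<Rightarrow> bit vec \<Rightarrow> (nat \<Rightarrow> real) \<Rightarrow> nat \<Rightarrow> real" where
  "torus_point r s y j =
    (if j = 1 then r else if 2 \<le> j \<and> j \<le> n then sgn_of_bit (s $ (j - 2)) * exp (y (j - 2)) else 0)"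

lemma torus_point_in_torus: "r \<noteq> 0 \<Longrightarrow> torus_point r s y \<in> torus"
  using n_pos unfolding torus_def torus_point_def by (auto simp: sgn_of_bit_def)

lemma torus_point_tail:
  assumes "q < m"
  shows "torus_point r s y (q + 2) = sgn_of_bit (s $ q) * exp (y q)"
proof -
  have "q + 2 \<le> n"
    using assms n_eq by simp
  then show ?thesis
    by (simp add: torus_point_def)
qed

lemma sign_pattern_torus_point: "s \<in> carrier_vec m \<Longrightarrow> sign_pattern (torus_point r s y) = s"
  by (intro eq_vecI)
    (use torus_point_tail in \<open>simp_all add: sign_pattern_def sign_bit_sgn_of_bit_mult\<close>)

lemma ln_abs_torus_point: "q < m \<Longrightarrow> ln \<bar>torus_point r s y (q + 2)\<bar> = y q"
  using torus_point_tail by (simp add: abs_mult sgn_of_bit_def)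

lemma torus_point_eq:
  assumes x: "x \<in> torus" and y: "\<forall>q<m. ln \<bar>x (q + 2)\<bar> = y q"
  shows "x = torus_point (x 1) (sign_pattern x) y"
proof
  fix j
  show "x j = torus_point (x 1) (sign_pattern x) y j"
  proof (cases "2 \<le> j \<and> j \<le> n")
    case True
    then obtain q where q: "q < m" "j = q + 2"
      using n_eq by (intro that[of "j - 2"]) auto
    have "\<bar>x j\<bar> = exp (y q)"
      using torus_coords_nonzero(2)[OF x q(1)] y q by (metis exp_ln zero_less_abs_iff)
    then show ?thesis
      using q torus_point_tail[OF q(1)] sgn_of_bit_sign_bit_mult_abs[of "x j"]
      by (simp add: sign_pattern_def)
  qed (use x in \<open>auto simp: torus_def torus_point_def\<close>)
qed

lemma solutions_above_eq:
  assumes r: "r \<noteq> 0" and nz: "\<forall>i\<in>{1..n}. rhs i r \<noteq> 0"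
    and Y: "\<forall>i\<in>{1..n}. vdot i Y = ln \<bar>rhs i r\<bar>"
  shows "{x \<in> solutions. x 1 = r}
    = (\<lambda>s. torus_point r s Y) ` {s \<in> carrier_vec m. (Bbar n w)\<^sup>T *\<^sub>v s = rhs_signs r}"
proof (intro equalityI subsetI)
  fix x assume "x \<in> {x \<in> solutions. x 1 = r}"
  then have x: "x \<in> torus" "x 1 = r" and eqs: "\<forall>i\<in>{1..n}. monom_int n (w i) x = g i r"
    unfolding solutions_def by auto
  have signs: "(Bbar n w)\<^sup>T *\<^sub>v sign_pattern x = rhs_signs r"
    and logs: "\<forall>i\<in>{1..n}. vdot i (\<lambda>q. ln \<bar>x (q + 2)\<bar>) = ln \<bar>rhs i r\<bar>"
    using eqs system_eq_iff[of r x, OF r x(2)] torus_coords_nonzero(2)[OF x(1)] by blast+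
  have "\<forall>q<m. ln \<bar>x (q + 2)\<bar> = Y q"
    using vdot_inj[of "\<lambda>q. ln \<bar>x (q + 2)\<bar>" Y] logs Y by simp
  then have "x = torus_point r (sign_pattern x) Y"
    using torus_point_eq[OF x(1)] x(2) by simp
  then show "x \<in> (\<lambda>s. torus_point r s Y) ` {s \<in> carrier_vec m. (Bbar n w)\<^sup>T *\<^sub>v s = rhs_signs r}"
    using signs by auto
next
  fix x assume "x \<in> (\<lambda>s. torus_point r s Y) ` {s \<in> carrier_vec m. (Bbar n w)\<^sup>T *\<^sub>v s = rhs_signs r}"
  then obtain s where s: "s \<in> carrier_vec m" "(Bbar n w)\<^sup>T *\<^sub>v s = rhs_signs r"
    and x: "x = torus_point r s Y"
    by auto
  have x1: "x 1 = r"
    by (simp add: x torus_point_def)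
  have "\<forall>i\<in>{1..n}. monom_int n (w i) x = g i r"
  proof (subst system_eq_iff[of r x, OF r x1])
    show "\<forall>q<m. x (q + 2) \<noteq> 0"
      using torus_point_tail by (simp add: x sgn_of_bit_def)
    have "vdot i (\<lambda>q. ln \<bar>x (q + 2)\<bar>) = vdot i Y" for i
      by (rule vdot_cong) (use ln_abs_torus_point in \<open>simp add: x\<close>)
    then show "(\<forall>i\<in>{1..n}. rhs i r \<noteq> 0) \<and> (Bbar n w)\<^sup>T *\<^sub>v sign_pattern x = rhs_signs r \<and>
        (\<forall>i\<in>{1..n}. vdot i (\<lambda>q. ln \<bar>x (q + 2)\<bar>) = ln \<bar>rhs i r\<bar>)"
      using nz s Y by (simp add: x sign_pattern_torus_point)
  qed
  then show "x \<in> {x \<in> solutions. x 1 = r}"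
    using torus_point_in_torus[OF r] x1 unfolding solutions_def x by simp
qed

lemma card_solutions_above:
  assumes "r \<in> admissible_roots"
  shows "card {x \<in> solutions. x 1 = r} = 2 ^ (m - vec_space.rank m (Bbar n w))"
proof -
  have r: "r \<noteq> 0" and nz: "\<forall>i\<in>{1..n}. rhs i r \<noteq> 0"
    and signs: "rhs_signs r \<in> orth_compl n {e \<in> carrier_vec n. Bbar n w *\<^sub>v e = 0\<^sub>v m}"
    and logs: "(\<Sum>i\<in>{1..n}. of_int (mu i) * ln \<bar>rhs i r\<bar>) = 0"
    using assms unfolding admissible_roots_iff by blast+
  have "rhs_signs r \<in> {(Bbar n w)\<^sup>T *\<^sub>v s | s. s \<in> carrier_vec m}"
    using signs image_transpose_eq_orth_compl_kernel_bit[OF Bbar_carrier] by simp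
  then obtain s0 where s0: "s0 \<in> carrier_vec m" "(Bbar n w)\<^sup>T *\<^sub>v s0 = rhs_signs r"
    by auto
  obtain Y where Y: "\<forall>i\<in>{1..n}. vdot i Y = ln \<bar>rhs i r\<bar>"
    using exists_vdot_eq[OF logs] by blast
  let ?S = "{s \<in> carrier_vec m. (Bbar n w)\<^sup>T *\<^sub>v s = rhs_signs r}"
  have "inj_on (\<lambda>s. torus_point r s Y) ?S"
    by (rule inj_on_inverseI[where g = sign_pattern]) (simp add: sign_pattern_torus_point)
  then have "card {x \<in> solutions. x 1 = r} = card ?S"
    unfolding solutions_above_eq[OF r nz Y] by (rule card_image)
  also have "\<dots> = card {s \<in> carrier_vec m. (Bbar n w)\<^sup>T *\<^sub>v s = 0\<^sub>v n}"
    using card_mat_fibre_bit[of "(Bbar n w)\<^sup>T" n m, OF _ s0(1)] Bbar_carrier unfolding s0(2) by simp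
  also have "\<dots> = 2 ^ (m - vec_space.rank m (Bbar n w))"
    by (rule card_mat_kernel_transpose_bit[OF Bbar_carrier])
  finally show ?thesis .
qed

lemma solution_first_coord_admissible:
  assumes "x \<in> solutions"
  shows "x 1 \<in> admissible_roots"
proof -
  have x: "x \<in> torus" and eqs: "\<forall>i\<in>{1..n}. monom_int n (w i) x = g i (x 1)"
    using assms unfolding solutions_def by auto
  have nz: "\<forall>i\<in>{1..n}. rhs i (x 1) \<noteq> 0"
    and signs: "(Bbar n w)\<^sup>T *\<^sub>v sign_pattern x = rhs_signs (x 1)"
    and logs: "\<forall>i\<in>{1..n}. vdot i (\<lambda>q. ln \<bar>x (q + 2)\<bar>) = ln \<bar>rhs i (x 1)\<bar>"
    using eqs system_eq_iff[of "x 1" x, OF torus_coords_nonzero(1)[OF x] refl]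
      torus_coords_nonzero(2)[OF x]
    by blast+
  have "rhs_signs (x 1) \<in> orth_compl n {e \<in> carrier_vec n. Bbar n w *\<^sub>v e = 0\<^sub>v m}"
    unfolding image_transpose_eq_orth_compl_kernel_bit[OF Bbar_carrier, symmetric]
    by (intro CollectI exI[of _ "sign_pattern x"]) (simp add: signs)
  moreover have "(\<Sum>i\<in>{1..n}. of_int (mu i) * ln \<bar>rhs i (x 1)\<bar>) = 0"
    using logs mu_vdot[of "\<lambda>q. ln \<bar>x (q + 2)\<bar>"] by simp
  ultimately show ?thesis
    using torus_coords_nonzero(1)[OF x] nz unfolding admissible_roots_iff by blast
qed

theorem card_solutions:
  "card solutions = 2 ^ (m - vec_space.rank m (Bbar n w)) * card admissible_roots"
  by (rule card_eq_mult_card_if_fibres[where f = "\<lambda>x. x 1"])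
    (use solution_first_coord_admissible card_solutions_above in auto)

end

theorem proposition1p3:
  fixes n l :: nat and w :: "nat \<Rightarrow> nat \<Rightarrow> int" and a b :: "nat \<Rightarrow> real"
    and mu :: "nat \<Rightarrow> int"
  assumes l_pos: "l > 0"
    and circ: "circuit n (circ_pts l w)"
    and ab_nz: "\<forall>i\<in>{1..n}. a i \<noteq> 0 \<and> b i \<noteq> 0"
    and no_common_root: "\<forall>i\<in>{1..n}. \<forall>k\<in>{1..n}. i \<noteq> k \<longrightarrow>
        \<not> (\<exists>z::complex. of_real (a i) + of_real (b i) * z ^ l = 0
                      \<and> of_real (a k) + of_real (b k) * z ^ l = 0)"
    and rel: "\<forall>j\<in>{1..n}. mu 0 * (if j = 1 then 1 else 0) + (\<Sum>i\<in>{1..n}. mu i * w i j) = 0"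
    and prim: "Gcd (mu ` {0..n}) = 1"
    and mu0: "mu 0 \<ge> 0"
  shows "card {x :: nat \<Rightarrow> real. (\<forall>j. j \<notin> {1..n} \<longrightarrow> x j = 0) \<and> (\<forall>j\<in>{1..n}. x j \<noteq> 0) \<and>
                (\<forall>i\<in>{1..n}. monom_int n (w i) x = gpol l (a i) (b i) (x 1))}
       = 2 ^ (n - 1 - rank2 (n - 1) (Bbar n w)) *
         card {r :: real. r \<noteq> 0 \<and> eliminant n l a b mu r = 0 \<and>
                (\<forall>eps :: nat \<Rightarrow> int.
                   Bbar n w *\<^sub>v vec n (\<lambda>i. of_int (eps (i + 1))) = 0\<^sub>v (n - 1) \<longrightarrow>
                   (\<Prod>i\<in>{1..n}. (gpol l (a i) (b i) r / r powi (w i 1)) powi (eps i)) > 0)}"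
proof -
  have "n = Suc (n - 1)"
    using circuit_pos[OF circ] by simp
  then interpret circuit_system n "n - 1" l w "\<lambda>i. gpol l (a i) (b i)" mu
    using circ rel prim mu0 by unfold_locales
  have sol: "{x. (\<forall>j. j \<notin> {1..n} \<longrightarrow> x j = 0) \<and> (\<forall>j\<in>{1..n}. x j \<noteq> 0) \<and>
      (\<forall>i\<in>{1..n}. monom_int n (w i) x = gpol l (a i) (b i) (x 1))} = solutions"
    unfolding solutions_def torus_def by auto
  have roots: "{r. r \<noteq> 0 \<and> eliminant n l a b mu r = 0 \<and>
      (\<forall>eps. Bbar n w *\<^sub>v vec n (\<lambda>i. of_int (eps (i + 1))) = 0\<^sub>v (n - 1) \<longrightarrow>
        (\<Prod>i\<in>{1..n}. (gpol l (a i) (b i) r / r powi (w i 1)) powi (eps i)) > 0)} = admissible_roots"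
    unfolding admissible_roots_def rhs_def elim_def eliminant_def by (rule refl)
  show ?thesis
    unfolding sol roots rank2_def by (rule card_solutions)
qed

end
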